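(* Let $(N_t)_{t\in\mathbb N_0}$ be an adapted sequence of nonnegative integrable random variables on a filtered probability space with expectation $\mathtt E$, and let $N_\infty:=\limsup_{t\to\infty}N_t$ (for a random time $T$, $N_T$ is defined pathwise, using $N_\infty$ on $\{T=\infty\}$). Consider: (i) $\mathtt E[\sup_{t\in\mathbb N_0}N_t]\le1$; (ii) $\mathtt E[N_T]\le1$ for all random times $T$ (possibly infinite, not necessarily stopping times); (iii) $\mathtt E[N_\tau]\le1$ for all stopping times $\tau$ (possibly infinite); (iv) $\mathtt E[g(1)\vee\sup_{t\in\mathbb N_0}g(N_t)]\le1$ for every nonnegative nondecreasing function $g$ on $[0,\infty)$ with $\int_1^\infty g(y)/y^2\,\mathrm dy=1$; in particular $\mathtt E[1\vee\sup_{t\in\mathbb N_0}\sqrt{N_t}]\le2$. Then (i) and (ii) are equivalent, (i) (equivalently (ii)) implies (iii), and (iii) implies (iv). *)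

theory Defs
  imports "HOL-Probability.Probability"
begin

text \<open>Value of the process N at a (possibly infinite) random time T, taken pathwise,
  with N_infinity := limsup_t N_t on {T = infinity}. Values in ennreal (N_infinity may be infinite).\<close>
definition stopped_at :: "(nat \<Rightarrow> 'a \<Rightarrow> real) \<Rightarrow> ('a \<Rightarrow> enat) \<Rightarrow> 'a \<Rightarrow> ennreal" where
  "stopped_at N T \<omega> =
     (if T \<omega> = \<infinity> then limsup (\<lambda>t. ennreal (N t \<omega>)) else ennreal (N (the_enat (T \<omega>)) \<omega>))"

definition stopping_time_enat :: "(nat \<Rightarrow> 'a measure) \<Rightarrow> ('a \<Rightarrow> enat) \<Rightarrow> bool" where
  "stopping_time_enat F T \<longleftrightarrow> (\<forall>t::nat. Measurable.pred (F t) (\<lambda>\<omega>. T \<omega> \<le> enat t))"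

end

theory Submission
  imports Defs "HOL-Real_Asymp.Real_Asymp"
begin

(* Every random time is bounded pathwise by the running supremum, so (i) gives (ii) and (iii).
   Conversely, the random time "first time the supremum is attained, infinity if it never is"
   realises the supremum, because an unattained supremum of a sequence equals its limsup.
   Stopping at the first passage above c turns (iii) into Ville's inequality
   P(sup_t N_t >= c) <= 1/c, i.e. the running supremum is stochastically dominated by the
   Pareto law with density 1/y^2 on [1, oo); the layer-cake formula then bounds
   E[max(g(1), sup_t g(N_t))] by the Pareto moment of g, which is int_1^oo g(y)/y^2 dy. *)

definition first_time :: "(nat \<Rightarrow> 'a \<Rightarrow> bool) \<Rightarrow> 'a \<Rightarrow> enat" where
  "first_time P \<omega> = (if \<exists>t. P t \<omega> then enat (LEAST t. P t \<omega>) else \<infinity>)"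

lemma first_time_le_enat_iff: "first_time P \<omega> \<le> enat t \<longleftrightarrow> (\<exists>s\<in>{..t}. P s \<omega>)"
proof
  assume "first_time P \<omega> \<le> enat t"
  then have ex: "\<exists>t. P t \<omega>" and "(LEAST t. P t \<omega>) \<le> t"
    by (auto simp: first_time_def split: if_splits)
  then show "\<exists>s\<in>{..t}. P s \<omega>" using LeastI_ex[OF ex] by auto
next
  assume "\<exists>s\<in>{..t}. P s \<omega>"
  then obtain s where "s \<le> t" "P s \<omega>" by auto
  then show "first_time P \<omega> \<le> enat t"
    using Least_le[of "\<lambda>t. P t \<omega>" s] by (auto simp: first_time_def)
qed

lemma measurable_first_time[measurable]:
  assumes [measurable]: "\<And>t. Measurable.pred M (P t)"
  shows "first_time P \<in> M \<rightarrow>\<^sub>M count_space UNIV"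
  unfolding first_time_def by measurable

lemma stopping_time_enat_first_time:
  assumes F: "filtration \<Omega> F" and P: "\<And>t. Measurable.pred (F t) (P t)"
  shows "stopping_time_enat F (first_time P)"
  unfolding stopping_time_enat_def first_time_le_enat_iff
  using filtration.sets_F_mono[OF F] P
  by (intro allI pred_intros_countable_bounded) (auto simp: pred_def filtration.space_F[OF F])

lemma stopped_at_first_time:
  "stopped_at N (first_time P) \<omega> =
     (if \<exists>t. P t \<omega> then ennreal (N (LEAST t. P t \<omega>) \<omega>) else limsup (\<lambda>t. ennreal (N t \<omega>)))"
  by (simp add: stopped_at_def first_time_def)

lemma stopped_at_le_SUP: "stopped_at N T \<omega> \<le> (SUP t. ennreal (N t \<omega>))"
proof (cases "T \<omega> = \<infinity>")
  case True
  have "limsup (\<lambda>t. ennreal (N t \<omega>)) \<le> (SUP t\<in>{0..}. ennreal (N t \<omega>))"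
    unfolding limsup_INF_SUP by (rule INF_lower) simp
  then show ?thesis using True by (simp add: stopped_at_def)
qed (auto simp: stopped_at_def intro: SUP_upper)

lemma limsup_eq_SUP_unattained:
  fixes f :: "nat \<Rightarrow> 'a::complete_linorder"
  assumes "\<And>t. f t \<noteq> (SUP t. f t)"
  shows "limsup f = (SUP t. f t)"
proof -
  have "(SUP t\<in>{n..}. f t) = (SUP t. f t)" for n
  proof (induction n)
    case (Suc n)
    have "insert n {Suc n..} = {n..}" by auto
    then have "(SUP t\<in>{n..}. f t) = sup (f n) (SUP t\<in>{Suc n..}. f t)"
      by (metis SUP_insert)
    with Suc have "sup (f n) (SUP t\<in>{Suc n..}. f t) = (SUP t. f t)" by simp
    moreover have "(SUP t\<in>{Suc n..}. f t) \<le> (SUP t. f t)" by (rule SUP_subset_mono) auto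
    ultimately show ?case using assms by (metis sup.absorb_iff2 sup_commute linear sup.orderE)
  qed simp
  then show ?thesis by (simp add: limsup_INF_SUP)
qed

lemma stopped_at_first_argmax:
  "stopped_at N (first_time (\<lambda>t \<omega>. ennreal (N t \<omega>) = (SUP s. ennreal (N s \<omega>)))) \<omega>
     = (SUP t. ennreal (N t \<omega>))"
  unfolding stopped_at_first_time
  by (auto intro: LeastI limsup_eq_SUP_unattained)

lemma ville_inequality:
  assumes F: "filtration (space M) F"
    and adapted: "\<And>t. N t \<in> borel_measurable (F t)"
    and N_meas [measurable]: "\<And>t. N t \<in> borel_measurable M"
    and stopped: "\<And>\<tau>. stopping_time_enat F \<tau> \<Longrightarrow> (\<integral>\<^sup>+ \<omega>. stopped_at N \<tau> \<omega> \<partial>M) \<le> 1"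
    and c: "c > 0"
  shows "emeasure M {\<omega>\<in>space M. \<exists>t. c \<le> N t \<omega>} \<le> ennreal (1 / c)"
proof -
  define E where "E = {\<omega>\<in>space M. \<exists>t. c \<le> N t \<omega>}"
  have E [measurable]: "E \<in> sets M" unfolding E_def by measurable
  let ?\<tau> = "first_time (\<lambda>t \<omega>. c \<le> N t \<omega>)"
  have "stopping_time_enat F ?\<tau>"
    using F by (rule stopping_time_enat_first_time) (use adapted in measurable)
  have "ennreal c * emeasure M E = (\<integral>\<^sup>+ \<omega>. ennreal c * indicator E \<omega> \<partial>M)"
    by (simp add: nn_integral_cmult_indicator)
  also have "\<dots> \<le> (\<integral>\<^sup>+ \<omega>. stopped_at N ?\<tau> \<omega> \<partial>M)"
  proof (intro nn_integral_mono)
    fix \<omega>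
    show "ennreal c * indicator E \<omega> \<le> stopped_at N ?\<tau> \<omega>"
      unfolding stopped_at_first_time
      by (auto simp: E_def indicator_def intro: ennreal_leI LeastI)
  qed
  also have "\<dots> \<le> 1" by (rule stopped) fact
  finally have "ennreal c * emeasure M E \<le> 1" .
  then have "ennreal (1 / c) * (ennreal c * emeasure M E) \<le> ennreal (1 / c)"
    using mult_left_mono[of _ 1 "ennreal (1 / c)"] by simp
  then show ?thesis
    using c by (simp add: E_def mult.assoc[symmetric] ennreal_mult[symmetric])
qed

lemma nn_integral_lborel_nonneg_below:
  "(\<integral>\<^sup>+ s. (if 0 \<le> s \<and> ennreal s < x then 1 else 0) \<partial>lborel) = x"
proof (cases x rule: ennreal_cases)
  case (real r)
  then have "(\<integral>\<^sup>+ s. (if 0 \<le> s \<and> ennreal s < x then 1 else 0) \<partial>lborel)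
      = (\<integral>\<^sup>+ s. indicator {0..<r} s \<partial>lborel)"
    by (intro nn_integral_cong) (auto simp: ennreal_less_iff indicator_def)
  then show ?thesis using real by simp
next
  case top
  have "ennreal (real n) \<le> emeasure lborel {0::real..}" for n
  proof -
    have "ennreal (real n) = emeasure lborel {0..real n}" by simp
    also have "\<dots> \<le> emeasure lborel {0::real..}" by (intro emeasure_mono) auto
    finally show ?thesis .
  qed
  then have "emeasure lborel {0::real..} = \<top>"
    by (metis SUP_least ennreal_SUP_of_nat_eq_top ennreal_of_nat_eq_real_of_nat top_unique)
  moreover have "(\<integral>\<^sup>+ s. (if 0 \<le> s \<and> ennreal s < x then 1 else 0) \<partial>lborel)
      = (\<integral>\<^sup>+ s. indicator {0::real..} s \<partial>lborel)"
    using top by (intro nn_integral_cong) (simp add: ennreal_less_top indicator_def)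
  ultimately show ?thesis using top by simp
qed

lemma nn_integral_layer_cake:
  assumes "sigma_finite_measure M" and [measurable]: "f \<in> borel_measurable M"
  shows "(\<integral>\<^sup>+ x. f x \<partial>M) = (\<integral>\<^sup>+ s\<in>{0..}. emeasure M {x\<in>space M. ennreal s < f x} \<partial>lborel)"
proof -
  interpret pair_sigma_finite M lborel
    using assms(1) by (simp add: pair_sigma_finite_def lborel.sigma_finite_measure_axioms)
  have "(\<integral>\<^sup>+ x. f x \<partial>M)
      = (\<integral>\<^sup>+ x. (\<integral>\<^sup>+ s. (if 0 \<le> s \<and> ennreal s < f x then 1 else 0) \<partial>lborel) \<partial>M)"
    by (simp add: nn_integral_lborel_nonneg_below)
  also have "\<dots> = (\<integral>\<^sup>+ s. (\<integral>\<^sup>+ x. (if 0 \<le> s \<and> ennreal s < f x then 1 else 0) \<partial>M) \<partial>lborel)"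
    by (rule Fubini'[symmetric]) measurable
  also have "\<dots> = (\<integral>\<^sup>+ s\<in>{0..}. emeasure M {x\<in>space M. ennreal s < f x} \<partial>lborel)"
  proof (intro nn_integral_cong)
    fix s :: real
    have "(\<integral>\<^sup>+ x. (if 0 \<le> s \<and> ennreal s < f x then 1 else 0) \<partial>M)
        = (\<integral>\<^sup>+ x. indicator {0..} s * indicator {x\<in>space M. ennreal s < f x} x \<partial>M)"
      by (intro nn_integral_cong) (auto simp: indicator_def)
    also have "\<dots> = indicator {0..} s * emeasure M {x\<in>space M. ennreal s < f x}"
      by (rule nn_integral_cmult_indicator) measurable
    finally show "(\<integral>\<^sup>+ x. (if 0 \<le> s \<and> ennreal s < f x then 1 else 0) \<partial>M)
        = emeasure M {x\<in>space M. ennreal s < f x} * indicator {0..} s"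
      by (simp add: mult.commute)
  qed
  finally show ?thesis .
qed

lemma nn_integral_mono_of_tail_le:
  assumes "sigma_finite_measure M" "sigma_finite_measure K"
    and "f \<in> borel_measurable M" "h \<in> borel_measurable K"
    and "\<And>s. 0 \<le> s \<Longrightarrow>
      emeasure M {x\<in>space M. ennreal s < f x} \<le> emeasure K {y\<in>space K. ennreal s < h y}"
  shows "(\<integral>\<^sup>+ x. f x \<partial>M) \<le> (\<integral>\<^sup>+ y. h y \<partial>K)"
  unfolding nn_integral_layer_cake[OF assms(1,3)] nn_integral_layer_cake[OF assms(2,4)]
  using assms(5) by (intro nn_integral_mono) (auto simp: indicator_def)

definition pareto :: "real measure" where
  "pareto = density lborel (\<lambda>y. ennreal (1 / y\<^sup>2) * indicator {1..} y)"

lemma space_pareto [simp]: "space pareto = UNIV"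
  and sets_pareto [simp, measurable_cong]: "sets pareto = sets borel"
  by (simp_all add: pareto_def)

lemma sigma_finite_pareto: "sigma_finite_measure pareto"
  unfolding pareto_def
  by (subst sigma_finite_measure.sigma_finite_iff_density_finite[OF lborel.sigma_finite_measure_axioms])
     (auto simp: indicator_def ennreal_mult_eq_top_iff)

lemma nn_integral_pareto:
  "f \<in> borel_measurable borel \<Longrightarrow>
    (\<integral>\<^sup>+ y. f y \<partial>pareto) = (\<integral>\<^sup>+ y\<in>{1..}. ennreal (1 / y\<^sup>2) * f y \<partial>lborel)"
  unfolding pareto_def by (subst nn_integral_density) (auto intro!: nn_integral_cong simp: mult_ac)

lemma emeasure_pareto_greaterThan:
  assumes "1 \<le> c"
  shows "emeasure pareto {c<..} = ennreal (1 / c)"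
proof -
  have "emeasure pareto {c<..} = (\<integral>\<^sup>+ y. ennreal (1 / y\<^sup>2) * indicator {c<..} y \<partial>lborel)"
    unfolding pareto_def using assms
    by (subst emeasure_density) (auto intro!: nn_integral_cong simp: indicator_def)
  also have "\<dots> = (\<integral>\<^sup>+ y. ennreal (1 / y\<^sup>2) * indicator {c..} y \<partial>lborel)"
    using AE_lborel_singleton[of c]
    by (intro nn_integral_cong_AE) (auto elim!: eventually_mono simp: indicator_def)
  also have "\<dots> = ennreal (0 - (- 1 / c))"
  proof (rule nn_integral_FTC_atLeast)
    show "((\<lambda>y. - 1 / y) has_real_derivative 1 / y\<^sup>2) (at y)" if "c \<le> y" for y
      using that assms by (auto intro!: derivative_eq_intros simp: power2_eq_square field_simps)
    show "((\<lambda>y::real. - 1 / y) \<longlongrightarrow> 0) at_top" by real_asymp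
  qed auto
  finally show ?thesis by simp
qed

lemma emeasure_hits_le_pareto:
  fixes X :: "nat \<Rightarrow> 'a \<Rightarrow> real"
  assumes [measurable]: "\<And>t. X t \<in> borel_measurable M"
    and maximal: "\<And>c. 1 \<le> c \<Longrightarrow> emeasure M {\<omega>\<in>space M. \<exists>t. c \<le> X t \<omega>} \<le> ennreal (1 / c)"
    and A: "A \<in> sets borel" "A \<subseteq> {1..}" and up: "\<And>y z. y \<in> A \<Longrightarrow> y \<le> z \<Longrightarrow> z \<in> A"
  shows "emeasure M {\<omega>\<in>space M. \<exists>t. X t \<omega> \<in> A} \<le> emeasure pareto A"
proof (cases "A = {}")
  case False
  define c where "c = Inf A"
  have below: "bdd_below A" using A by (auto simp: bdd_below_def)
  have "1 \<le> c" unfolding c_def using False A by (intro cInf_greatest) auto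
  have "A \<subseteq> {c..}" unfolding c_def using below by (auto intro: cInf_lower)
  have "{c<..} \<subseteq> A"
  proof
    fix z assume "z \<in> {c<..}"
    then obtain y where "y \<in> A" "y < z" using cInf_lessD[OF False] by (auto simp: c_def)
    then show "z \<in> A" using up by auto
  qed
  have "emeasure M {\<omega>\<in>space M. \<exists>t. X t \<omega> \<in> A} \<le> emeasure M {\<omega>\<in>space M. \<exists>t. c \<le> X t \<omega>}"
    using \<open>A \<subseteq> {c..}\<close> by (intro emeasure_mono) auto
  also have "\<dots> \<le> ennreal (1 / c)" using maximal \<open>1 \<le> c\<close> .
  also have "\<dots> = emeasure pareto {c<..}" using \<open>1 \<le> c\<close> by (rule emeasure_pareto_greaterThan[symmetric])
  also have "\<dots> \<le> emeasure pareto A" using \<open>{c<..} \<subseteq> A\<close> A by (intro emeasure_mono) auto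
  finally show ?thesis .
qed simp

lemma nn_integral_sup_mono_le_pareto:
  fixes X :: "nat \<Rightarrow> 'a \<Rightarrow> real" and g :: "real \<Rightarrow> real"
  assumes "prob_space M"
    and [measurable]: "\<And>t. X t \<in> borel_measurable M"
    and X_nonneg: "\<And>t \<omega>. \<omega> \<in> space M \<Longrightarrow> 0 \<le> X t \<omega>"
    and maximal: "\<And>c. 1 \<le> c \<Longrightarrow> emeasure M {\<omega>\<in>space M. \<exists>t. c \<le> X t \<omega>} \<le> ennreal (1 / c)"
    and g_nonneg: "\<And>y. 0 \<le> y \<Longrightarrow> 0 \<le> g y" and g_mono: "mono_on {0..} g"
  shows "(\<integral>\<^sup>+ \<omega>. sup (ennreal (g 1)) (SUP t. ennreal (g (X t \<omega>))) \<partial>M)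
           \<le> (\<integral>\<^sup>+ y\<in>{1..}. ennreal (g y / y\<^sup>2) \<partial>lborel)"
proof -
  interpret prob_space M by fact
  define h where "h y = g (max 0 y)" for y
  have h_mono: "mono h" unfolding mono_def h_def by (auto intro!: mono_onD[OF g_mono])
  have h_nonneg: "0 \<le> h y" for y by (simp add: h_def g_nonneg)
  have [measurable]: "h \<in> borel_measurable borel" by (rule borel_measurable_mono[OF h_mono])
  define G where "G \<omega> = sup (ennreal (h 1)) (SUP t. ennreal (h (X t \<omega>)))" for \<omega>
  have tail: "emeasure M {\<omega>\<in>space M. ennreal s < G \<omega>} \<le> emeasure pareto {y. s < h y}"
    if "0 \<le> s" for s
  proof (cases "s < h 1")
    case True
    have "emeasure M {\<omega>\<in>space M. ennreal s < G \<omega>} \<le> emeasure pareto {1<..}"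
      by (simp add: emeasure_pareto_greaterThan emeasure_le_1)
    also have "\<dots> \<le> emeasure pareto {y. s < h y}"
      using True monoD[OF h_mono, of 1] by (intro emeasure_mono) (auto intro: less_le_trans)
    finally show ?thesis .
  next
    case False
    have "{\<omega>\<in>space M. ennreal s < G \<omega>} \<subseteq> {\<omega>\<in>space M. \<exists>t. X t \<omega> \<in> {y. s < h y}}"
      using False that h_nonneg by (auto simp: G_def sup_max less_max_iff_disj less_SUP_iff ennreal_less_iff)
    then have "emeasure M {\<omega>\<in>space M. ennreal s < G \<omega>}
        \<le> emeasure M {\<omega>\<in>space M. \<exists>t. X t \<omega> \<in> {y. s < h y}}"
      by (intro emeasure_mono) measurable
    also have "\<dots> \<le> emeasure pareto {y. s < h y}"
    proof (rule emeasure_hits_le_pareto[OF _ maximal])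
      show "{y. s < h y} \<subseteq> {1..}"
      proof
        fix y assume "y \<in> {y. s < h y}"
        then show "y \<in> {1..}" using False monoD[OF h_mono, of y 1] by (cases "y \<le> 1") auto
      qed
      show "z \<in> {y. s < h y}" if "y \<in> {y. s < h y}" "y \<le> z" for y z
        using that monoD[OF h_mono, of y z] by auto
    qed auto
    finally show ?thesis .
  qed
  have "(\<integral>\<^sup>+ \<omega>. sup (ennreal (g 1)) (SUP t. ennreal (g (X t \<omega>))) \<partial>M) = (\<integral>\<^sup>+ \<omega>. G \<omega> \<partial>M)"
    by (intro nn_integral_cong) (simp add: G_def h_def X_nonneg)
  also have "\<dots> \<le> (\<integral>\<^sup>+ y. ennreal (h y) \<partial>pareto)"
  proof (rule nn_integral_mono_of_tail_le[OF sigma_finite_measure_axioms sigma_finite_pareto])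
    show "G \<in> borel_measurable M" unfolding G_def by measurable
    show "(\<lambda>y. ennreal (h y)) \<in> borel_measurable pareto" by measurable
    fix s :: real assume "0 \<le> s"
    have "{y\<in>space pareto. ennreal s < ennreal (h y)} = {y. s < h y}"
      using \<open>0 \<le> s\<close> by (auto simp: ennreal_less_iff)
    then show "emeasure M {\<omega>\<in>space M. ennreal s < G \<omega>}
        \<le> emeasure pareto {y\<in>space pareto. ennreal s < ennreal (h y)}"
      using tail[OF \<open>0 \<le> s\<close>] by simp
  qed
  also have "\<dots> = (\<integral>\<^sup>+ y\<in>{1..}. ennreal (1 / y\<^sup>2) * ennreal (h y) \<partial>lborel)"
    by (rule nn_integral_pareto) measurable
  also have "\<dots> = (\<integral>\<^sup>+ y\<in>{1..}. ennreal (g y / y\<^sup>2) \<partial>lborel)"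
  proof (intro nn_integral_cong)
    fix y :: real
    have "1 \<le> y \<Longrightarrow> ennreal (1 / y\<^sup>2) * ennreal (h y) = ennreal (g y / y\<^sup>2)"
      using g_nonneg[of y] by (simp add: h_def ennreal_mult[symmetric])
    then show "ennreal (1 / y\<^sup>2) * ennreal (h y) * indicator {1..} y
        = ennreal (g y / y\<^sup>2) * indicator {1..} y"
      by (simp add: indicator_def)
  qed
  finally show ?thesis .
qed

lemma nn_integral_half_sqrt_over_square:
  "(\<integral>\<^sup>+ y\<in>{1..}. ennreal (sqrt y / 2 / y\<^sup>2) \<partial>lborel) = 1"
proof -
  have "(\<integral>\<^sup>+ y\<in>{1..}. ennreal (sqrt y / 2 / y\<^sup>2) \<partial>lborel) = ennreal (0 - (- 1 / sqrt 1))"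
  proof (rule nn_integral_FTC_atLeast[where F="\<lambda>y. - 1 / sqrt y" and T=0])
    show "((\<lambda>y. - 1 / sqrt y) has_real_derivative sqrt y / 2 / y\<^sup>2) (at y)" if "1 \<le> y" for y
    proof -
      have "((\<lambda>y. - 1 / sqrt y) has_real_derivative 1 / (2 * sqrt y * y)) (at y)"
        using that by (auto intro!: derivative_eq_intros simp: field_simps)
      moreover have "1 / (2 * sqrt y * y) = sqrt y / 2 / y\<^sup>2"
        using that by (simp add: field_simps power2_eq_square)
      ultimately show ?thesis by simp
    qed
    show "((\<lambda>y::real. - 1 / sqrt y) \<longlongrightarrow> 0) at_top" by real_asymp
  qed auto
  then show ?thesis by simp
qed

lemma sup_sqrt_eq_double_half:
  "sup 1 (SUP t. ennreal (sqrt (x t)))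
     = 2 * sup (ennreal (sqrt 1 / 2)) (SUP t. ennreal (sqrt (x t) / 2))"
proof -
  have double: "2 * ennreal (r / 2) = ennreal r" for r :: real
  proof (cases "0 \<le> r")
    case True
    have "2 * ennreal (r / 2) = ennreal 2 * ennreal (r / 2)" by (simp only: ennreal_numeral)
    also have "\<dots> = ennreal (2 * (r / 2))" using True by (intro ennreal_mult[symmetric]) auto
    also have "\<dots> = ennreal r" by simp
    finally show ?thesis .
  qed (simp add: ennreal_neg)
  have distrib: "2 * sup a b = sup (2 * a) (2 * b)" for a b :: ennreal
    by (simp add: sup_max max_def ennreal_mult_le_mult_iff)
  show ?thesis
    by (simp only: distrib SUP_mult_left_ennreal double) simp
qed

lemma nn_integral_sup_sqrt_le:
  fixes X :: "nat \<Rightarrow> 'a \<Rightarrow> real"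
  assumes [measurable]: "\<And>t. X t \<in> borel_measurable M"
    and half: "(\<integral>\<^sup>+ \<omega>. sup (ennreal (sqrt 1 / 2)) (SUP t. ennreal (sqrt (X t \<omega>) / 2)) \<partial>M) \<le> 1"
  shows "(\<integral>\<^sup>+ \<omega>. sup 1 (SUP t. ennreal (sqrt (X t \<omega>))) \<partial>M) \<le> 2"
proof -
  have "(\<integral>\<^sup>+ \<omega>. sup 1 (SUP t. ennreal (sqrt (X t \<omega>))) \<partial>M)
      = 2 * (\<integral>\<^sup>+ \<omega>. sup (ennreal (sqrt 1 / 2)) (SUP t. ennreal (sqrt (X t \<omega>) / 2)) \<partial>M)"
    unfolding sup_sqrt_eq_double_half by (rule nn_integral_cmult) measurable
  also have "\<dots> \<le> 2 * 1" by (intro mult_left_mono half) simp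
  finally show ?thesis by simp
qed

theorem lemma3:
  fixes M :: "'a measure" and F :: "nat \<Rightarrow> 'a measure" and N :: "nat \<Rightarrow> 'a \<Rightarrow> real"
  assumes "prob_space M"
    and "\<And>t. space (F t) = space M"
    and "\<And>t. sets (F t) \<subseteq> sets M"
    and "\<And>s t. s \<le> t \<Longrightarrow> sets (F s) \<subseteq> sets (F t)"
    and "\<And>t. N t \<in> borel_measurable (F t)"
    and "\<And>t. integrable M (N t)"
    and "\<And>t \<omega>. \<omega> \<in> space M \<Longrightarrow> N t \<omega> \<ge> 0"
  defines "cond_i \<equiv> (\<integral>\<^sup>+ \<omega>. (SUP t. ennreal (N t \<omega>)) \<partial>M) \<le> 1"
    and "cond_ii \<equiv> (\<forall>T. T \<in> M \<rightarrow>\<^sub>M count_space UNIV \<longrightarrow>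
                        (\<integral>\<^sup>+ \<omega>. stopped_at N T \<omega> \<partial>M) \<le> 1)"
    and "cond_iii \<equiv> (\<forall>\<tau>. stopping_time_enat F \<tau> \<longrightarrow>
                        (\<integral>\<^sup>+ \<omega>. stopped_at N \<tau> \<omega> \<partial>M) \<le> 1)"
    and "cond_iv \<equiv> (\<forall>g :: real \<Rightarrow> real.
                       (\<forall>y\<ge>0. g y \<ge> 0) \<longrightarrow> mono_on {0..} g \<longrightarrow>
                       (\<integral>\<^sup>+ y\<in>{1..}. ennreal (g y / y\<^sup>2) \<partial>lborel) = 1 \<longrightarrow>
                       (\<integral>\<^sup>+ \<omega>. sup (ennreal (g 1)) (SUP t. ennreal (g (N t \<omega>))) \<partial>M) \<le> 1)"
  shows "(cond_i \<longleftrightarrow> cond_ii) \<and> (cond_i \<longrightarrow> cond_iii)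
         \<and> (cond_iii \<longrightarrow> cond_iv
              \<and> (\<integral>\<^sup>+ \<omega>. sup 1 (SUP t. ennreal (sqrt (N t \<omega>))) \<partial>M) \<le> 2)"
proof -
  interpret prob_space M by fact
  have F: "filtration (space M) F" using assms(2,4) by unfold_locales auto
  have N_meas [measurable]: "N t \<in> borel_measurable M" for t
    using assms(6) by (rule borel_measurable_integrable)
  have stopped_le_1: "(\<integral>\<^sup>+ \<omega>. stopped_at N T \<omega> \<partial>M) \<le> 1" if cond_i for T
    using nn_integral_mono[OF stopped_at_le_SUP] that unfolding cond_i_def by (rule order_trans)
  have ii_i: cond_i if cond_ii
  proof -
    let ?T = "first_time (\<lambda>t \<omega>. ennreal (N t \<omega>) = (SUP s. ennreal (N s \<omega>)))"
    have "?T \<in> M \<rightarrow>\<^sub>M count_space UNIV" by measurable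
    then have "(\<integral>\<^sup>+ \<omega>. stopped_at N ?T \<omega> \<partial>M) \<le> 1" using that unfolding cond_ii_def by blast
    then show ?thesis unfolding cond_i_def stopped_at_first_argmax .
  qed
  have maximal: "emeasure M {\<omega>\<in>space M. \<exists>t. c \<le> N t \<omega>} \<le> ennreal (1 / c)"
    if cond_iii "1 \<le> c" for c
    using F assms(5) N_meas that by (intro ville_inequality) (auto simp: cond_iii_def)
  have iii_iv: cond_iv if cond_iii
    unfolding cond_iv_def
  proof (intro allI impI)
    fix g :: "real \<Rightarrow> real"
    assume "\<forall>y\<ge>0. 0 \<le> g y" "mono_on {0..} g" "(\<integral>\<^sup>+ y\<in>{1..}. ennreal (g y / y\<^sup>2) \<partial>lborel) = 1"
    then show "(\<integral>\<^sup>+ \<omega>. sup (ennreal (g 1)) (SUP t. ennreal (g (N t \<omega>))) \<partial>M) \<le> 1"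
      using nn_integral_sup_mono_le_pareto[OF assms(1) N_meas assms(7) maximal[OF that], of g] by simp
  qed
  have iv_sqrt: "(\<integral>\<^sup>+ \<omega>. sup 1 (SUP t. ennreal (sqrt (N t \<omega>))) \<partial>M) \<le> 2" if cond_iv
    using that nn_integral_half_sqrt_over_square unfolding cond_iv_def
    by (intro nn_integral_sup_sqrt_le N_meas) (auto intro!: mono_onI elim!: allE[of _ "\<lambda>y. sqrt y / 2"])
  show ?thesis using stopped_le_1 ii_i iii_iv iv_sqrt unfolding cond_ii_def cond_iii_def by blast
qed

end
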